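(* Let $p(x,y)$ and $q(x,y)$ be real homogeneous polynomials in two variables of the same degree $j>1$, not both identically zero. If $$\frac{\partial p}{\partial x}+\frac{\partial q}{\partial y}=0 \qquad\text{and}\qquad \frac{\partial p}{\partial x}\frac{\partial q}{\partial y}-\frac{\partial p}{\partial y}\frac{\partial q}{\partial x}=0$$ identically on $\mathbb{R}^2$, then there exist $\alpha,\beta,\zeta\in\mathbb{R}$ with $\alpha^2+\beta^2\neq 0$ and $\zeta\neq 0$ such that $$p(x,y)=\zeta\alpha(\beta x-\alpha y)^j,\qquad q(x,y)=\zeta\beta(\beta x-\alpha y)^j.$$ *)

theory Defs
  imports "HOL-Analysis.Analysis"
begin

definition hom_poly2 :: "nat \<Rightarrow> (real \<Rightarrow> real \<Rightarrow> real) \<Rightarrow> bool" where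
  "hom_poly2 j p \<longleftrightarrow> (\<exists>a::nat \<Rightarrow> real. \<forall>x y. p x y = (\<Sum>k\<le>j. a k * x ^ k * y ^ (j - k)))"

end

theory Submission
  imports Defs "HOL-Computational_Algebra.Polynomial"
begin

text \<open>Write \<open>p = \<Sum> a\<^sub>k x\<^sup>k y\<^sup>j\<^sup>-\<^sup>k\<close> and \<open>q = \<Sum> b\<^sub>k x\<^sup>k y\<^sup>j\<^sup>-\<^sup>k\<close>.
  Euler's identity \<open>x p\<^sub>x + y p\<^sub>y = j p\<close> turns the vanishing Jacobian into
  \<open>p\<^sub>x q = q\<^sub>x p\<close>; on the line \<open>y = 1\<close> this is \<open>P' Q = Q' P\<close> for univariate polynomials,
  which forces \<open>P\<close> and \<open>Q\<close> to be proportional, i.e. \<open>\<beta> a = \<alpha> b\<close>.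
  Together with the vanishing divergence this makes the derivatives of \<open>p\<close> and \<open>q\<close> in
  the direction \<open>(\<alpha>, \<beta>)\<close> vanish, so both are constant along that direction, and by
  homogeneity they are multiples of \<open>(\<beta> x - \<alpha> y)\<^sup>j\<close>.\<close>

lemma coeff_pderiv_mult_degree_sum:
  fixes P Q :: "'a::{idom, ring_char_0} poly"
  assumes "degree P > 0"
  shows "coeff (pderiv P * Q) (degree P - 1 + degree Q)
    = of_nat (degree P) * lead_coeff P * lead_coeff Q"
proof -
  have "coeff (pderiv P) (degree P - 1) = of_nat (degree P) * lead_coeff P"
    using assms by (simp add: coeff_pderiv)
  then show ?thesis
    using coeff_mult_degree_sum[of "pderiv P" Q] by (simp add: degree_pderiv)
qed

text \<open>Comparing the top coefficients \<open>(deg P - deg Q) lc P lc Q\<close> of \<open>P' Q - Q' P\<close>.\<close>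

lemma degree_eq_if_pderiv_wronskian_eq_0:
  fixes P Q :: "'a::{idom, ring_char_0} poly"
  assumes W: "pderiv P * Q = pderiv Q * P" and "P \<noteq> 0" "Q \<noteq> 0"
  shows "degree P = degree Q"
proof (cases "degree P = 0 \<or> degree Q = 0")
  case True
  then have "pderiv P = 0 \<or> pderiv Q = 0" by (simp add: pderiv_eq_0_iff)
  then have "pderiv P = 0 \<and> pderiv Q = 0" using W assms(2,3) by auto
  then show ?thesis by (simp add: pderiv_eq_0_iff)
next
  case False
  then have "degree P - 1 + degree Q = degree Q - 1 + degree P" by simp
  then have "of_nat (degree P) * lead_coeff P * lead_coeff Q
      = of_nat (degree Q) * lead_coeff Q * lead_coeff P"
    using W coeff_pderiv_mult_degree_sum[of P Q] coeff_pderiv_mult_degree_sum[of Q P] False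
    by (metis gr0I)
  then have "(of_nat (degree P) :: 'a) = of_nat (degree Q)"
    using assms(2,3) by (simp add: mult.commute)
  then show ?thesis by simp
qed

text \<open>Since \<open>P\<close> and \<open>Q\<close> have the same degree, \<open>R = lc Q \<cdot> P - lc P \<cdot> Q\<close> has smaller
  degree than \<open>P\<close> yet still satisfies \<open>P' R = R' P\<close>, so \<open>R = 0\<close>.\<close>

lemma pderiv_wronskian_eq_0_imp_proportional:
  fixes P Q :: "'a::{idom, ring_char_0} poly"
  assumes W: "pderiv P * Q = pderiv Q * P"
  shows "\<exists>\<alpha> \<beta>. (\<alpha> \<noteq> 0 \<or> \<beta> \<noteq> 0) \<and> smult \<beta> P = smult \<alpha> Q"
proof (cases "P = 0 \<or> Q = 0")
  case True
  then show ?thesis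
  proof
    assume "P = 0" then show ?thesis by (intro exI[of _ 0] exI[of _ 1]) simp
  next
    assume "Q = 0" then show ?thesis by (intro exI[of _ 1] exI[of _ 0]) simp
  qed
next
  case False
  define R where "R = smult (lead_coeff Q) P - smult (lead_coeff P) Q"
  have deg: "degree P = degree Q"
    using degree_eq_if_pderiv_wronskian_eq_0 W False by blast
  have "pderiv P * R = pderiv R * P"
    using W unfolding R_def by (simp add: pderiv_diff pderiv_smult algebra_simps)
  moreover have "degree R < degree P" if "R \<noteq> 0"
  proof -
    have "degree R \<le> degree P"
      unfolding R_def using deg by (intro degree_diff_le) auto
    moreover have "coeff R (degree P) = 0"
      unfolding R_def using deg by simp
    ultimately show ?thesis
      using that by (metis leading_coeff_0_iff order_le_imp_less_or_eq)
  qed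
  ultimately have "R = 0"
    using degree_eq_if_pderiv_wronskian_eq_0[of P R] False by fastforce
  then show ?thesis
    using False unfolding R_def by (intro exI[of _ "lead_coeff P"] exI[of _ "lead_coeff Q"]) simp
qed

definition hpoly :: "nat \<Rightarrow> (nat \<Rightarrow> 'a::comm_ring_1) \<Rightarrow> 'a \<Rightarrow> 'a \<Rightarrow> 'a" where
  "hpoly j a x y = (\<Sum>k\<le>j. a k * x ^ k * y ^ (j - k))"

text \<open>The exponents \<open>k - 1\<close> and \<open>j - k - 1\<close> are truncated at \<open>0\<close> exactly where the
  factors \<open>k\<close> resp. \<open>j - k\<close> vanish.\<close>

definition hpoly_dx :: "nat \<Rightarrow> (nat \<Rightarrow> 'a::comm_ring_1) \<Rightarrow> 'a \<Rightarrow> 'a \<Rightarrow> 'a" where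
  "hpoly_dx j a x y = (\<Sum>k\<le>j. a k * (of_nat k * x ^ (k - 1)) * y ^ (j - k))"

definition hpoly_dy :: "nat \<Rightarrow> (nat \<Rightarrow> 'a::comm_ring_1) \<Rightarrow> 'a \<Rightarrow> 'a \<Rightarrow> 'a" where
  "hpoly_dy j a x y = (\<Sum>k\<le>j. a k * x ^ k * (of_nat (j - k) * y ^ (j - k - 1)))"

lemma hom_poly2_iff_hpoly: "hom_poly2 j p \<longleftrightarrow> (\<exists>a. p = hpoly j a)"
  unfolding hom_poly2_def hpoly_def by (auto simp: fun_eq_iff)

lemma has_field_derivative_hpoly_x:
  "((\<lambda>s. hpoly j a s y) has_field_derivative hpoly_dx j a x y) (at x)"
  unfolding hpoly_def hpoly_dx_def
  by (rule DERIV_sum) (auto intro!: derivative_eq_intros)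

lemma has_field_derivative_hpoly_y:
  "((\<lambda>t. hpoly j a x t) has_field_derivative hpoly_dy j a x y) (at y)"
  unfolding hpoly_def hpoly_dy_def
  by (rule DERIV_sum) (auto intro!: derivative_eq_intros)

lemma has_field_derivative_hpoly_line:
  "((\<lambda>t. hpoly j a (x + t * u) (y + t * v)) has_field_derivative
     u * hpoly_dx j a (x + t * u) (y + t * v) + v * hpoly_dy j a (x + t * u) (y + t * v)) (at t)"
  unfolding hpoly_def hpoly_dx_def hpoly_dy_def sum_distrib_left sum.distrib[symmetric]
  by (rule DERIV_sum) (auto intro!: derivative_eq_intros simp: algebra_simps)

lemma deriv_hpoly_x: "deriv (\<lambda>s. hpoly j a s y) x = hpoly_dx j a x y"
  by (rule DERIV_imp_deriv[OF has_field_derivative_hpoly_x])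

lemma deriv_hpoly_y: "deriv (\<lambda>t. hpoly j a x t) y = hpoly_dy j a x y"
  by (rule DERIV_imp_deriv[OF has_field_derivative_hpoly_y])

lemma hpoly_euler: "x * hpoly_dx j a x y + y * hpoly_dy j a x y = of_nat j * hpoly j a x y"
  unfolding hpoly_def hpoly_dx_def hpoly_dy_def sum_distrib_left sum.distrib[symmetric]
proof (rule sum.cong)
  fix k assume "k \<in> {..j}"
  then have jk: "of_nat k + of_nat (j - k) = (of_nat j :: 'a)"
    by (simp flip: of_nat_add)
  have dx: "x * (of_nat k * x ^ (k - 1)) = of_nat k * x ^ k"
    by (cases k) auto
  have dy: "y * (of_nat (j - k) * y ^ (j - k - 1)) = of_nat (j - k) * y ^ (j - k)"
    by (cases "j - k") auto
  have "x * (a k * (of_nat k * x ^ (k - 1)) * y ^ (j - k))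
      + y * (a k * x ^ k * (of_nat (j - k) * y ^ (j - k - 1)))
      = a k * y ^ (j - k) * (x * (of_nat k * x ^ (k - 1)))
      + a k * x ^ k * (y * (of_nat (j - k) * y ^ (j - k - 1)))"
    by (simp add: algebra_simps)
  also have "\<dots> = (of_nat k + of_nat (j - k)) * (a k * x ^ k * y ^ (j - k))"
    unfolding dx dy by (simp add: algebra_simps)
  finally show "x * (a k * (of_nat k * x ^ (k - 1)) * y ^ (j - k))
      + y * (a k * x ^ k * (of_nat (j - k) * y ^ (j - k - 1)))
      = of_nat j * (a k * x ^ k * y ^ (j - k))"
    unfolding jk .
qed simp

lemma hpoly_scale: "hpoly j a (c * x) (c * y) = c ^ j * hpoly j a x y"
  unfolding hpoly_def sum_distrib_left
proof (rule sum.cong)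
  fix k assume "k \<in> {..j}"
  then have "c ^ j = c ^ k * c ^ (j - k)" by (simp flip: power_add)
  then show "a k * (c * x) ^ k * (c * y) ^ (j - k) = c ^ j * (a k * x ^ k * y ^ (j - k))"
    by (simp add: power_mult_distrib)
qed simp

lemma hpoly_proportional:
  assumes "\<forall>k\<le>j. \<beta> * a k = \<alpha> * b k"
  shows "\<beta> * hpoly j a x y = \<alpha> * hpoly j b x y"
    and "\<beta> * hpoly_dx j a x y = \<alpha> * hpoly_dx j b x y"
    and "\<beta> * hpoly_dy j a x y = \<alpha> * hpoly_dy j b x y"
proof -
  have e: "\<beta> * (a k * c) = \<alpha> * (b k * c)" if "k \<le> j" for k c
    using assms that by (metis mult.assoc)
  show "\<beta> * hpoly j a x y = \<alpha> * hpoly j b x y"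
    unfolding hpoly_def sum_distrib_left by (rule sum.cong) (auto simp: mult.assoc e)
  show "\<beta> * hpoly_dx j a x y = \<alpha> * hpoly_dx j b x y"
    unfolding hpoly_dx_def sum_distrib_left by (rule sum.cong) (auto simp: mult.assoc e)
  show "\<beta> * hpoly_dy j a x y = \<alpha> * hpoly_dy j b x y"
    unfolding hpoly_dy_def sum_distrib_left by (rule sum.cong) (auto simp: mult.assoc e)
qed

lemma hpoly_dx_mult_eq_if_jacobian_eq_0:
  fixes a b :: "nat \<Rightarrow> 'a::{idom, ring_char_0}"
  assumes "j > 0"
    and "hpoly_dx j a x y * hpoly_dy j b x y - hpoly_dy j a x y * hpoly_dx j b x y = 0"
  shows "hpoly_dx j a x y * hpoly j b x y = hpoly_dx j b x y * hpoly j a x y"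
proof -
  have "of_nat j * (hpoly_dx j b x y * hpoly j a x y - hpoly_dx j a x y * hpoly j b x y)
      = hpoly_dx j b x y * (of_nat j * hpoly j a x y) - hpoly_dx j a x y * (of_nat j * hpoly j b x y)"
    by (simp add: algebra_simps)
  also have "\<dots> = - y * (hpoly_dx j a x y * hpoly_dy j b x y - hpoly_dy j a x y * hpoly_dx j b x y)"
    unfolding hpoly_euler[symmetric] by (simp add: algebra_simps)
  finally show ?thesis using assms by simp
qed

definition hpoly_dehom :: "nat \<Rightarrow> (nat \<Rightarrow> 'a::comm_ring_1) \<Rightarrow> 'a poly" where
  "hpoly_dehom j a = (\<Sum>k\<le>j. monom (a k) k)"

lemma poly_hpoly_dehom: "poly (hpoly_dehom j a) t = hpoly j a t 1"
  unfolding hpoly_dehom_def hpoly_def by (simp add: poly_sum poly_monom)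

lemma poly_pderiv_hpoly_dehom: "poly (pderiv (hpoly_dehom j a)) t = hpoly_dx j a t 1"
  unfolding hpoly_dehom_def hpoly_dx_def
  by (simp add: higher_pderiv_sum[where n = 1, simplified] pderiv_monom poly_sum poly_monom algebra_simps)

lemma coeff_hpoly_dehom: "k \<le> j \<Longrightarrow> coeff (hpoly_dehom j a) k = a k"
  unfolding hpoly_dehom_def by (simp add: coeff_sum coeff_monom)

lemma hpoly_coeffs_proportional_if_jacobian_eq_0:
  fixes a b :: "nat \<Rightarrow> 'a::{idom, ring_char_0}"
  assumes "j > 0"
    and "\<And>x y. hpoly_dx j a x y * hpoly_dy j b x y - hpoly_dy j a x y * hpoly_dx j b x y = 0"
  shows "\<exists>\<alpha> \<beta>. (\<alpha> \<noteq> 0 \<or> \<beta> \<noteq> 0) \<and> (\<forall>k\<le>j. \<beta> * a k = \<alpha> * b k)"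
proof -
  let ?P = "hpoly_dehom j a" and ?Q = "hpoly_dehom j b"
  have "poly (pderiv ?P * ?Q) = poly (pderiv ?Q * ?P)"
    using hpoly_dx_mult_eq_if_jacobian_eq_0[OF assms]
    by (simp add: fun_eq_iff poly_hpoly_dehom poly_pderiv_hpoly_dehom)
  then have "pderiv ?P * ?Q = pderiv ?Q * ?P"
    by (simp add: poly_eq_poly_eq_iff)
  then obtain \<alpha> \<beta> where "\<alpha> \<noteq> 0 \<or> \<beta> \<noteq> 0" "smult \<beta> ?P = smult \<alpha> ?Q"
    using pderiv_wronskian_eq_0_imp_proportional by blast
  moreover have "\<beta> * a k = \<alpha> * b k" if "k \<le> j" and "smult \<beta> ?P = smult \<alpha> ?Q" for k
    using arg_cong[OF that(2), of "\<lambda>R. coeff R k"] by (simp add: coeff_hpoly_dehom that(1))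
  ultimately show ?thesis by blast
qed

text \<open>With \<open>\<beta> a = \<alpha> b\<close>, the divergence-free condition \<open>p\<^sub>x = - q\<^sub>y\<close> gives
  \<open>\<beta> (\<alpha> p\<^sub>x + \<beta> p\<^sub>y) = \<alpha> (\<alpha> p\<^sub>x + \<beta> p\<^sub>y) = 0\<close>, and likewise for \<open>q\<close>.\<close>

lemma hpoly_directional_derivs_eq_0:
  fixes a b :: "nat \<Rightarrow> 'a::idom"
  assumes "\<forall>k\<le>j. \<beta> * a k = \<alpha> * b k" and "\<alpha> \<noteq> 0 \<or> \<beta> \<noteq> 0"
    and "hpoly_dx j a x y + hpoly_dy j b x y = 0"
  shows "\<alpha> * hpoly_dx j a x y + \<beta> * hpoly_dy j a x y = 0"
    and "\<alpha> * hpoly_dx j b x y + \<beta> * hpoly_dy j b x y = 0"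
proof -
  have scaled: "\<beta> * hpoly_dx j a x y = \<alpha> * hpoly_dx j b x y"
      "\<beta> * hpoly_dy j a x y = \<alpha> * hpoly_dy j b x y"
    using hpoly_proportional[OF assms(1)] by auto
  have "\<beta> * (\<alpha> * hpoly_dx j a x y + \<beta> * hpoly_dy j a x y) = 0"
      "\<alpha> * (\<alpha> * hpoly_dx j a x y + \<beta> * hpoly_dy j a x y) = 0"
    using scaled assms(3) by algebra+
  then show "\<alpha> * hpoly_dx j a x y + \<beta> * hpoly_dy j a x y = 0"
    using assms(2) by auto
  have "\<beta> * (\<alpha> * hpoly_dx j b x y + \<beta> * hpoly_dy j b x y) = 0"
      "\<alpha> * (\<alpha> * hpoly_dx j b x y + \<beta> * hpoly_dy j b x y) = 0"
    using scaled assms(3) by algebra+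
  then show "\<alpha> * hpoly_dx j b x y + \<beta> * hpoly_dy j b x y = 0"
    using assms(2) by auto
qed

lemma hpoly_constant_along_direction:
  fixes c :: "nat \<Rightarrow> real"
  assumes "\<And>x y. \<alpha> * hpoly_dx j c x y + \<beta> * hpoly_dy j c x y = 0"
  shows "hpoly j c (x + t * \<alpha>) (y + t * \<beta>) = hpoly j c x y"
proof -
  have "((\<lambda>t. hpoly j c (x + t * \<alpha>) (y + t * \<beta>)) has_real_derivative 0) (at s)" for s
    using has_field_derivative_hpoly_line[of j c x \<alpha> y \<beta> s] assms by simp
  from DERIV_isconst_all[OF allI[OF this], of t 0] show ?thesis by simp
qed

text \<open>Write \<open>(x, y) = s (\<beta>, -\<alpha>) + t (\<alpha>, \<beta>)\<close>; constancy along \<open>(\<alpha>, \<beta>)\<close> removes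
  \<open>t\<close> and homogeneity pulls out \<open>s\<^sup>j\<close>.\<close>

lemma hpoly_eq_power_of_linear_form:
  fixes c :: "nat \<Rightarrow> real"
  assumes "\<And>x y. \<alpha> * hpoly_dx j c x y + \<beta> * hpoly_dy j c x y = 0"
    and "\<alpha>\<^sup>2 + \<beta>\<^sup>2 \<noteq> 0"
  shows "hpoly j c x y = ((\<beta> * x - \<alpha> * y) / (\<alpha>\<^sup>2 + \<beta>\<^sup>2)) ^ j * hpoly j c \<beta> (- \<alpha>)"
proof -
  define s where "s = (\<beta> * x - \<alpha> * y) / (\<alpha>\<^sup>2 + \<beta>\<^sup>2)"
  define t where "t = (\<alpha> * x + \<beta> * y) / (\<alpha>\<^sup>2 + \<beta>\<^sup>2)"
  have "x = s * \<beta> + t * \<alpha>" "y = s * (- \<alpha>) + t * \<beta>"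
    using assms(2) unfolding s_def t_def
    by (simp_all add: divide_simps) (auto simp: algebra_simps power2_eq_square)
  then have "hpoly j c x y = hpoly j c (s * \<beta>) (s * (- \<alpha>))"
    using hpoly_constant_along_direction[OF assms(1), of "s * \<beta>" t "s * (- \<alpha>)"] by simp
  also have "\<dots> = s ^ j * hpoly j c \<beta> (- \<alpha>)"
    by (rule hpoly_scale)
  finally show ?thesis unfolding s_def .
qed

lemma proportional_imp_common_multiple:
  fixes u v :: "'a::field"
  assumes "\<alpha> \<noteq> 0 \<or> \<beta> \<noteq> 0" and "\<beta> * u = \<alpha> * v"
  shows "\<exists>\<zeta>. u = \<zeta> * \<alpha> \<and> v = \<zeta> * \<beta>"
proof (cases "\<alpha> = 0")
  case True
  with assms show ?thesis by (intro exI[of _ "v / \<beta>"]) auto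
next
  case False
  with assms show ?thesis by (intro exI[of _ "u / \<alpha>"]) (auto simp: field_simps)
qed

theorem lemma1:
  fixes p q :: "real \<Rightarrow> real \<Rightarrow> real" and j :: nat
  assumes "j > 1"
    and "hom_poly2 j p" and "hom_poly2 j q"
    and "\<exists>x y. p x y \<noteq> 0 \<or> q x y \<noteq> 0"
    and "\<forall>x y. deriv (\<lambda>s. p s y) x + deriv (\<lambda>t. q x t) y = 0"
    and "\<forall>x y. deriv (\<lambda>s. p s y) x * deriv (\<lambda>t. q x t) y
               - deriv (\<lambda>t. p x t) y * deriv (\<lambda>s. q s y) x = 0"
  shows "\<exists>\<alpha> \<beta> \<zeta> :: real. \<alpha>\<^sup>2 + \<beta>\<^sup>2 \<noteq> 0 \<and> \<zeta> \<noteq> 0 \<and>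
           (\<forall>x y. p x y = \<zeta> * \<alpha> * (\<beta> * x - \<alpha> * y) ^ j \<and>
                  q x y = \<zeta> * \<beta> * (\<beta> * x - \<alpha> * y) ^ j)"
proof -
  obtain a b where p: "p = hpoly j a" and q: "q = hpoly j b"
    using assms(2,3) by (auto simp: hom_poly2_iff_hpoly)
  have div: "\<And>x y. hpoly_dx j a x y + hpoly_dy j b x y = 0"
    using assms(5) by (simp add: p q deriv_hpoly_x deriv_hpoly_y)
  have jac: "\<And>x y. hpoly_dx j a x y * hpoly_dy j b x y - hpoly_dy j a x y * hpoly_dx j b x y = 0"
    using assms(6) by (simp add: p q deriv_hpoly_x deriv_hpoly_y)
  have "j > 0" using assms(1) by simp
  then obtain \<alpha> \<beta> where ab: "\<alpha> \<noteq> 0 \<or> \<beta> \<noteq> 0" and coeffs: "\<forall>k\<le>j. \<beta> * a k = \<alpha> * b k"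
    using hpoly_coeffs_proportional_if_jacobian_eq_0[OF _ jac] by blast
  have N: "\<alpha>\<^sup>2 + \<beta>\<^sup>2 \<noteq> 0" using ab by simp
  note dirs = hpoly_directional_derivs_eq_0[OF coeffs ab div]
  obtain \<zeta> where \<zeta>: "hpoly j a \<beta> (- \<alpha>) = \<zeta> * \<alpha>" "hpoly j b \<beta> (- \<alpha>) = \<zeta> * \<beta>"
    using proportional_imp_common_multiple[OF ab hpoly_proportional(1)[OF coeffs]] by blast
  define \<zeta>' where "\<zeta>' = \<zeta> / (\<alpha>\<^sup>2 + \<beta>\<^sup>2) ^ j"
  have pq: "p x y = \<zeta>' * \<alpha> * (\<beta> * x - \<alpha> * y) ^ j \<and> q x y = \<zeta>' * \<beta> * (\<beta> * x - \<alpha> * y) ^ j"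
    for x y
    using hpoly_eq_power_of_linear_form[OF dirs(1) N] hpoly_eq_power_of_linear_form[OF dirs(2) N] \<zeta>
    by (simp add: p q \<zeta>'_def power_divide)
  with assms(4) have "\<zeta>' \<noteq> 0" by force
  with pq N show ?thesis by blast
qed

end
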